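(* Let $n\ge2$, $N\ge1$, $\Omega\subset\mathbb R^n$ open. Let $a:[0,\infty)\to[0,\infty)$ be of the form $a(t)=\widehat a(t^2)$ for some $\widehat a\in C^1([0,\infty))$, with $a(t)>0$ for $t>0$, and assume $i_a>-\tfrac12$. Then there exists a positive constant $C=C(n,N,i_a)$ such that, for every $\mathbf u=(u^1,\dots,u^N)\in C^3(\Omega,\mathbb R^N)$, $$\big|\mathrm{\mathbf{div}}(a(|\nabla\mathbf u|)\nabla\mathbf u)\big|^2\ge\sum_{j=1}^n\big(a(|\nabla\mathbf u|)^2\,\mathbf u_{x_j}\cdot\Delta\mathbf u\big)_{x_j}-\sum_{i=1}^n\Big(a(|\nabla\mathbf u|)^2\sum_{j=1}^n\mathbf u_{x_j}\cdot\mathbf u_{x_ix_j}\Big)_{x_i}+C\,a(|\nabla\mathbf u|)^2|\nabla^2\mathbf u|^2\quad\text{in }\Omega.$$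
   Context: $i_a=\inf_{t>0}\frac{ta'(t)}{a(t)}$. The dot denotes the scalar product in $\mathbb R^N$, and $|\nabla^2\mathbf u|=\big(\sum_{\alpha=1}^N\sum_{i,j=1}^n(u^\alpha_{x_ix_j})^2\big)^{1/2}$. *)

theory Defs
  imports "HOL-Analysis.Analysis"
begin

definition partial :: "'n::finite \<Rightarrow> (real^'n \<Rightarrow> 'b::real_normed_vector) \<Rightarrow> real^'n \<Rightarrow> 'b" where
  "partial j f x = vector_derivative (\<lambda>t. f (x + t *\<^sub>R axis j 1)) (at 0)"

fun Ck :: "nat \<Rightarrow> (real^'n::finite) set \<Rightarrow> (real^'n \<Rightarrow> 'b::real_normed_vector) \<Rightarrow> bool" where
  "Ck 0 U f = continuous_on U f"
| "Ck (Suc k) U f = ((\<forall>x\<in>U. f differentiable (at x)) \<and> (\<forall>j. Ck k U (partial j f)))"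

definition admissible_a :: "(real \<Rightarrow> real) \<Rightarrow> bool" where
  "admissible_a a \<longleftrightarrow>
     (\<exists>ah ah'. continuous_on {0..} ah' \<and>
        (\<forall>t\<ge>0. (ah has_real_derivative ah' t) (at t within {0..})) \<and>
        (\<forall>t\<ge>0. a t = ah (t\<^sup>2))) \<and>
     (\<forall>t\<ge>0. a t \<ge> 0) \<and> (\<forall>t>0. a t > 0)"

definition index_a :: "(real \<Rightarrow> real) \<Rightarrow> ereal" where
  "index_a a = (INF t\<in>{0<..}. ereal (t * deriv a t / a t))"

definition grad_norm :: "(real^'n::finite \<Rightarrow> real^'m::finite) \<Rightarrow> real^'n \<Rightarrow> real" where
  "grad_norm u x = sqrt (\<Sum>j\<in>UNIV. (norm (partial j u x))\<^sup>2)"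

definition laplacian :: "(real^'n::finite \<Rightarrow> real^'m::finite) \<Rightarrow> real^'n \<Rightarrow> real^'m" where
  "laplacian u x = (\<Sum>k\<in>UNIV. partial k (partial k u) x)"

definition hess_norm_sq :: "(real^'n::finite \<Rightarrow> real^'m::finite) \<Rightarrow> real^'n \<Rightarrow> real" where
  "hess_norm_sq u x = (\<Sum>i\<in>UNIV. \<Sum>j\<in>UNIV. (norm (partial i (partial j u) x))\<^sup>2)"

end

theory Submission
  imports Defs
begin

text \<open>Write \<open>A = a(|\<nabla>u|) = ah(|\<nabla>u|^2)\<close> and \<open>B = ah'(|\<nabla>u|^2)\<close>, so that
  \<open>A_xi = 2 B (\<nabla>u \<bullet> \<nabla>u_xi)\<close>. Expanding the three divergences by the product rule, the
  third-order terms cancel by the symmetry of third derivatives, and the difference of the two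
  sides without the C-term is exactly
  \<open>|\<Sum>j A_xj u_xj|^2 + A^2 |\<nabla>^2u|^2 + 4 A B \<Sum>i (\<nabla>u \<bullet> \<nabla>u_xi)^2\<close>.
  When \<open>B < 0\<close>, the last sum is at most \<open>|\<nabla>u|^2 |\<nabla>^2u|^2\<close> by Cauchy-Schwarz, while
  \<open>2 |\<nabla>u|^2 B / A = t a'(t) / a(t) \<ge> i_a\<close> at \<open>t = |\<nabla>u|\<close>. Hence \<open>C = min 1 (1 + 2 i_a)\<close> works.\<close>

lemma partial_eqI:
  assumes "((\<lambda>t. f (x + t *\<^sub>R axis j 1)) has_vector_derivative D) (at 0)"
  shows "partial j f x = D"
  using assms by (simp add: partial_def vector_derivative_at)

lemma has_vector_derivative_partial:
  fixes f :: "real^'n::finite \<Rightarrow> 'b::real_normed_vector"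
  assumes "f differentiable (at x)"
  shows "((\<lambda>t. f (x + t *\<^sub>R axis j 1)) has_vector_derivative partial j f x) (at 0)"
proof -
  have "(\<lambda>t::real. x + t *\<^sub>R axis j 1) differentiable (at 0)"
    by (intro derivative_intros)
  then have "(f \<circ> (\<lambda>t::real. x + t *\<^sub>R axis j 1)) differentiable (at 0)"
    by (rule differentiable_chain_at) (simp add: assms)
  then show ?thesis
    unfolding partial_def by (simp add: o_def vector_derivative_works[symmetric])
qed

lemma has_real_derivative_vec_nth:
  assumes "(f has_vector_derivative D) (at t)"
  shows "((\<lambda>t. f t $ c) has_real_derivative D $ c) (at t)"
  using bounded_linear.has_vector_derivative[OF bounded_linear_vec_nth assms, of c]
  by (simp add: has_real_derivative_iff_has_vector_derivative)

lemma partial_cong_open: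
  fixes f g :: "real^'n::finite \<Rightarrow> 'b::real_normed_vector"
  assumes "open S" "x \<in> S" and eq: "\<And>y. y \<in> S \<Longrightarrow> f y = g y"
    and "f differentiable (at x)"
  shows "partial k g x = partial k f x"
proof -
  obtain r where r: "r > 0" "ball x r \<subseteq> S"
    using assms(1,2) open_contains_ball by blast
  have "((\<lambda>t. g (x + t *\<^sub>R axis k 1)) has_vector_derivative partial k f x) (at 0)"
  proof (rule has_vector_derivative_transform_within_open
      [OF has_vector_derivative_partial[OF assms(4)] open_ball[of 0 r]])
    show "(0::real) \<in> ball 0 r" using r by simp
    fix t :: real
    assume "t \<in> ball 0 r"
    then have "x + t *\<^sub>R axis k 1 \<in> S" using r by (auto simp: dist_norm)
    then show "f (x + t *\<^sub>R axis k 1) = g (x + t *\<^sub>R axis k 1)" using eq by blast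
  qed
  then show ?thesis by (rule partial_eqI)
qed

lemma DERIV_line_shift:
  fixes f :: "'a::real_normed_vector \<Rightarrow> real"
  assumes "((\<lambda>t. f (y + t *\<^sub>R v)) has_real_derivative D) (at 0)" and "y = x + s *\<^sub>R v"
  shows "((\<lambda>s. f (x + s *\<^sub>R v)) has_real_derivative D) (at s)"
proof -
  have "(\<lambda>t. f (x + (t + s) *\<^sub>R v)) = (\<lambda>t. f (y + t *\<^sub>R v))"
    using assms(2) by (simp add: algebra_simps scaleR_add_left)
  then have "((\<lambda>s. f (x + s *\<^sub>R v)) has_real_derivative D) (at (0 + s))"
    using assms(1) by (subst DERIV_shift) simp
  then show ?thesis by simp
qed

lemma dist_add_scaleR_unit_le:
  fixes v w :: "'a::real_normed_vector"
  assumes "norm v = 1" "norm w = 1" "0 \<le> s" "0 \<le> t"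
  shows "dist (x + s *\<^sub>R v + t *\<^sub>R w) x \<le> s + t"
proof -
  have "norm (s *\<^sub>R v + t *\<^sub>R w) \<le> norm (s *\<^sub>R v) + norm (t *\<^sub>R w)"
    by (rule norm_triangle_ineq)
  then show ?thesis using assms by (simp add: dist_norm add.assoc)
qed

lemma second_difference_mean_value:
  fixes \<phi> :: "'a::real_normed_vector \<Rightarrow> real"
  assumes S: "ball x r \<subseteq> S"
    and dv: "\<And>y. y \<in> S \<Longrightarrow> ((\<lambda>t. \<phi> (y + t *\<^sub>R v)) has_real_derivative Dv y) (at 0)"
    and dwv: "\<And>y. y \<in> S \<Longrightarrow> ((\<lambda>t. Dv (y + t *\<^sub>R w)) has_real_derivative Dwv y) (at 0)"
    and h: "0 < h" "2 * h < r" and unit: "norm v = 1" "norm w = 1"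
  shows "\<exists>p. dist p x \<le> 2 * h \<and>
     \<phi> (x + h *\<^sub>R v + h *\<^sub>R w) - \<phi> (x + h *\<^sub>R v) - \<phi> (x + h *\<^sub>R w) + \<phi> x = h\<^sup>2 * Dwv p"
proof -
  have inS: "x + s *\<^sub>R v + t *\<^sub>R w \<in> S" if "0 \<le> s" "s \<le> h" "0 \<le> t" "t \<le> h" for s t
    using dist_add_scaleR_unit_le[OF unit, of s t x] that h S by (auto simp: dist_commute)
  define G where "G s = \<phi> (x + s *\<^sub>R v + h *\<^sub>R w) - \<phi> (x + s *\<^sub>R v)" for s
  have "(G has_real_derivative Dv (x + s *\<^sub>R v + h *\<^sub>R w) - Dv (x + s *\<^sub>R v)) (at s)"
    if "0 \<le> s" "s \<le> h" for s
  proof -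
    have "((\<lambda>s. \<phi> (x + h *\<^sub>R w + s *\<^sub>R v)) has_real_derivative Dv (x + s *\<^sub>R v + h *\<^sub>R w)) (at s)"
      by (rule DERIV_line_shift[OF dv]) (use inS[of s h] that h in \<open>auto simp: algebra_simps\<close>)
    moreover have "((\<lambda>s. \<phi> (x + s *\<^sub>R v)) has_real_derivative Dv (x + s *\<^sub>R v)) (at s)"
      by (rule DERIV_line_shift[OF dv]) (use inS[of s 0] that h in auto)
    ultimately show ?thesis unfolding G_def by (simp add: DERIV_diff algebra_simps)
  qed
  then obtain \<sigma> where \<sigma>: "0 < \<sigma>" "\<sigma> < h"
    and G: "G h - G 0 = h * (Dv (x + \<sigma> *\<^sub>R v + h *\<^sub>R w) - Dv (x + \<sigma> *\<^sub>R v))"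
    using MVT2[of 0 h G "\<lambda>s. Dv (x + s *\<^sub>R v + h *\<^sub>R w) - Dv (x + s *\<^sub>R v)"] h by auto
  have "((\<lambda>t. Dv (x + \<sigma> *\<^sub>R v + t *\<^sub>R w)) has_real_derivative Dwv (x + \<sigma> *\<^sub>R v + t *\<^sub>R w)) (at t)"
    if "0 \<le> t" "t \<le> h" for t
    by (rule DERIV_line_shift[OF dwv]) (use inS[of \<sigma> t] that \<sigma> in auto)
  then obtain \<tau> where \<tau>: "0 < \<tau>" "\<tau> < h"
    and K: "Dv (x + \<sigma> *\<^sub>R v + h *\<^sub>R w) - Dv (x + \<sigma> *\<^sub>R v) = h * Dwv (x + \<sigma> *\<^sub>R v + \<tau> *\<^sub>R w)"
    using MVT2[of 0 h "\<lambda>t. Dv (x + \<sigma> *\<^sub>R v + t *\<^sub>R w)" "\<lambda>t. Dwv (x + \<sigma> *\<^sub>R v + t *\<^sub>R w)"] h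
    by auto
  have "dist (x + \<sigma> *\<^sub>R v + \<tau> *\<^sub>R w) x \<le> 2 * h"
    using dist_add_scaleR_unit_le[OF unit, of \<sigma> \<tau> x] \<sigma> \<tau> by simp
  moreover have "\<phi> (x + h *\<^sub>R v + h *\<^sub>R w) - \<phi> (x + h *\<^sub>R v) - \<phi> (x + h *\<^sub>R w) + \<phi> x
      = h\<^sup>2 * Dwv (x + \<sigma> *\<^sub>R v + \<tau> *\<^sub>R w)"
    using G K by (simp add: G_def power2_eq_square algebra_simps)
  ultimately show ?thesis by blast
qed

lemma directional_derivatives_commute:
  fixes \<phi> :: "'a::real_normed_vector \<Rightarrow> real"
  assumes "open S" "x \<in> S"
    and dv: "\<And>y. y \<in> S \<Longrightarrow> ((\<lambda>t. \<phi> (y + t *\<^sub>R v)) has_real_derivative Dv y) (at 0)"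
    and dw: "\<And>y. y \<in> S \<Longrightarrow> ((\<lambda>t. \<phi> (y + t *\<^sub>R w)) has_real_derivative Dw y) (at 0)"
    and dwv: "\<And>y. y \<in> S \<Longrightarrow> ((\<lambda>t. Dv (y + t *\<^sub>R w)) has_real_derivative Dwv y) (at 0)"
    and dvw: "\<And>y. y \<in> S \<Longrightarrow> ((\<lambda>t. Dw (y + t *\<^sub>R v)) has_real_derivative Dvw y) (at 0)"
    and cont: "isCont Dwv x" "isCont Dvw x"
    and unit: "norm v = 1" "norm w = 1"
  shows "Dwv x = Dvw x"
proof (rule ccontr)
  assume "Dwv x \<noteq> Dvw x"
  define e where "e = \<bar>Dwv x - Dvw x\<bar> / 2"
  have "e > 0" using \<open>Dwv x \<noteq> Dvw x\<close> by (simp add: e_def)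
  then obtain d1 d2 where d: "d1 > 0" "d2 > 0"
    and d1: "\<And>y. dist y x < d1 \<Longrightarrow> dist (Dwv y) (Dwv x) < e"
    and d2: "\<And>y. dist y x < d2 \<Longrightarrow> dist (Dvw y) (Dvw x) < e"
    using cont unfolding continuous_at_eps_delta by metis
  obtain r where r: "r > 0" "ball x r \<subseteq> S" using assms(1,2) open_contains_ball by blast
  define h where "h = min r (min d1 d2) / 4"
  have h: "0 < h" "2 * h < r" "2 * h < d1" "2 * h < d2" using r d by (auto simp: h_def)
  obtain p where p: "dist p x \<le> 2 * h"
    "\<phi> (x + h *\<^sub>R v + h *\<^sub>R w) - \<phi> (x + h *\<^sub>R v) - \<phi> (x + h *\<^sub>R w) + \<phi> x = h\<^sup>2 * Dwv p"
    using second_difference_mean_value[OF r(2) dv dwv h(1,2) unit] by blast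
  obtain q where q: "dist q x \<le> 2 * h"
    "\<phi> (x + h *\<^sub>R w + h *\<^sub>R v) - \<phi> (x + h *\<^sub>R w) - \<phi> (x + h *\<^sub>R v) + \<phi> x = h\<^sup>2 * Dvw q"
    using second_difference_mean_value[OF r(2) dw dvw h(1,2) unit(2,1)] by blast
  have "Dwv p = Dvw q" using p(2) q(2) h(1) by (simp add: algebra_simps)
  moreover have "dist (Dwv p) (Dwv x) < e" "dist (Dvw q) (Dvw x) < e"
    using d1[of p] d2[of q] p(1) q(1) h by simp_all
  ultimately show False by (simp add: e_def dist_real_def abs_if split: if_splits)
qed

lemma partial_commute:
  fixes g :: "real^'n::finite \<Rightarrow> real^'m::finite"
  assumes "open S" "x \<in> S"
    and "\<And>y. y \<in> S \<Longrightarrow> g differentiable (at y)"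
    and "\<And>y k. y \<in> S \<Longrightarrow> partial k g differentiable (at y)"
    and "\<And>k l. isCont (partial k (partial l g)) x"
  shows "partial j (partial i g) x = partial i (partial j g) x"
proof -
  have "partial j (partial i g) x $ c = partial i (partial j g) x $ c" for c
    by (rule directional_derivatives_commute[OF assms(1,2),
          where \<phi>="\<lambda>y. g y $ c" and Dv="\<lambda>y. partial i g y $ c" and Dw="\<lambda>y. partial j g y $ c"])
      (auto intro!: has_real_derivative_vec_nth has_vector_derivative_partial continuous_intros assms)
  then show ?thesis by (simp add: vec_eq_iff)
qed

lemma Ck3_D:
  assumes "Ck 3 \<Omega> u"
  shows "\<And>y. y \<in> \<Omega> \<Longrightarrow> u differentiable (at y)"
    and "\<And>y j. y \<in> \<Omega> \<Longrightarrow> partial j u differentiable (at y)"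
    and "\<And>y j k. y \<in> \<Omega> \<Longrightarrow> partial k (partial j u) differentiable (at y)"
    and "\<And>j k l. continuous_on \<Omega> (partial l (partial k (partial j u)))"
  using assms by (simp_all add: numeral_3_eq_3)

lemma Ck3_partial_third_commute:
  fixes u :: "real^'n::finite \<Rightarrow> real^'m::finite"
  assumes "open \<Omega>" "x \<in> \<Omega>" and "Ck 3 \<Omega> u"
  shows "partial j (partial k (partial k u)) x = partial k (partial k (partial j u)) x"
proof -
  note u = Ck3_D[OF assms(3)]
  have second: "partial k (partial j u) y = partial j (partial k u) y" if "y \<in> \<Omega>" for y
    using that by (intro partial_commute[OF assms(1) that u(1,2)] differentiable_imp_continuous_within u(3))
  have "isCont (partial a (partial b (partial k u))) x" for a b
    by (rule continuous_on_interior[OF u(4)]) (simp add: interior_open[OF assms(1)] assms(2))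
  then have "partial j (partial k (partial k u)) x = partial k (partial j (partial k u)) x"
    by (intro partial_commute[OF assms(1,2) u(2,3)])
  also have "\<dots> = partial k (partial k (partial j u)) x"
    by (rule partial_cong_open[OF assms(1,2) second u(3)[OF assms(2)]])
  finally show ?thesis .
qed

lemma partial_scaleR:
  fixes g :: "real^'n::finite \<Rightarrow> 'b::real_normed_vector"
  assumes "((\<lambda>t. f (x + t *\<^sub>R axis j 1)) has_real_derivative f') (at 0)"
    and "g differentiable (at x)"
  shows "partial j (\<lambda>y. f y *\<^sub>R g y) x = f' *\<^sub>R g x + f x *\<^sub>R partial j g x"
  using has_vector_derivative_scaleR[OF assms(1) has_vector_derivative_partial[OF assms(2)]]
  by (intro partial_eqI) (simp add: add.commute)

lemma partial_power2_mult:
  fixes f g :: "real^'n::finite \<Rightarrow> real"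
  assumes "((\<lambda>t. f (x + t *\<^sub>R axis j 1)) has_real_derivative f') (at 0)"
    and "((\<lambda>t. g (x + t *\<^sub>R axis j 1)) has_real_derivative g') (at 0)"
  shows "partial j (\<lambda>y. (f y)\<^sup>2 * g y) x = 2 * f x * f' * g x + (f x)\<^sup>2 * g'"
  using DERIV_mult[OF DERIV_power[OF assms(1), of 2] assms(2)]
  by (intro partial_eqI)
    (simp add: has_real_derivative_iff_has_vector_derivative[symmetric] algebra_simps power2_eq_square)

lemma has_real_derivative_partial_inner:
  fixes f g :: "real^'n::finite \<Rightarrow> 'b::real_inner"
  assumes "f differentiable (at x)" and "g differentiable (at x)"
  shows "((\<lambda>t. f (x + t *\<^sub>R axis j 1) \<bullet> g (x + t *\<^sub>R axis j 1)) has_real_derivative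
      partial j f x \<bullet> g x + f x \<bullet> partial j g x) (at 0)"
  using bounded_bilinear.has_vector_derivative[OF bounded_bilinear_inner
      has_vector_derivative_partial[OF assms(1)] has_vector_derivative_partial[OF assms(2)]]
  by (simp add: has_real_derivative_iff_has_vector_derivative add.commute)

text \<open>The third-order term is written as \<open>u_xixixj\<close>, not \<open>(\<Delta>u)_xj\<close>, so that it cancels
  against the one in partial_weighted_gradient_hessian.\<close>

lemma partial_weighted_gradient_laplacian:
  fixes u :: "real^'n::finite \<Rightarrow> real^'m::finite" and A :: "real^'n \<Rightarrow> real"
  assumes "open \<Omega>" "x \<in> \<Omega>" "Ck 3 \<Omega> u"
    and A: "\<And>j. ((\<lambda>t. A (x + t *\<^sub>R axis j 1)) has_real_derivative A' j) (at 0)"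
  shows "(\<Sum>j\<in>UNIV. partial j (\<lambda>y. (A y)\<^sup>2 * (partial j u y \<bullet> laplacian u y)) x)
    = 2 * A x * ((\<Sum>j\<in>UNIV. A' j *\<^sub>R partial j u x) \<bullet> laplacian u x)
      + (A x)\<^sup>2 * (laplacian u x \<bullet> laplacian u x)
      + (A x)\<^sup>2 * (\<Sum>i\<in>UNIV. \<Sum>j\<in>UNIV. partial j u x \<bullet> partial i (partial i (partial j u)) x)"
proof -
  note u = Ck3_D[OF assms(3)]
  define L where "L = laplacian u x"
  have L_diff: "laplacian u differentiable (at x)"
    unfolding laplacian_def using u(3)[OF assms(2)] by (intro differentiable_sum) auto
  have "partial j (\<lambda>y. (A y)\<^sup>2 * (partial j u y \<bullet> laplacian u y)) x
      = 2 * A x * (A' j * (partial j u x \<bullet> L)) + (A x)\<^sup>2 * (partial j (partial j u) x \<bullet> L)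
        + (A x)\<^sup>2 * (partial j u x \<bullet> partial j (laplacian u) x)" for j
    unfolding L_def
    by (subst partial_power2_mult[OF A has_real_derivative_partial_inner[OF u(2)[OF assms(2)] L_diff]])
      (simp add: algebra_simps)
  moreover have "partial j (laplacian u) x = (\<Sum>i\<in>UNIV. partial i (partial i (partial j u)) x)" for j
  proof -
    have "partial j (laplacian u) x = (\<Sum>i\<in>UNIV. partial j (partial i (partial i u)) x)"
      unfolding laplacian_def using u(3)[OF assms(2)]
      by (intro partial_eqI has_vector_derivative_sum has_vector_derivative_partial) auto
    then show ?thesis by (simp add: Ck3_partial_third_commute[OF assms(1-3)])
  qed
  moreover have "(\<Sum>j\<in>UNIV. partial j (partial j u) x \<bullet> L) = L \<bullet> L"
    by (subst (2) L_def) (simp add: laplacian_def inner_sum_left)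
  moreover have "(\<Sum>j\<in>UNIV. partial j u x \<bullet> (\<Sum>i\<in>UNIV. partial i (partial i (partial j u)) x))
      = (\<Sum>i\<in>UNIV. \<Sum>j\<in>UNIV. partial j u x \<bullet> partial i (partial i (partial j u)) x)"
    unfolding inner_sum_right by (rule sum.swap)
  ultimately show ?thesis
    unfolding L_def[symmetric]
    by (simp add: sum.distrib sum_distrib_left[symmetric] inner_sum_left)
qed

lemma partial_weighted_gradient_hessian:
  fixes u :: "real^'n::finite \<Rightarrow> real^'m::finite" and A :: "real^'n \<Rightarrow> real"
  assumes du: "\<And>j. partial j u differentiable (at x)"
    and ddu: "\<And>i j. partial i (partial j u) differentiable (at x)"
    and A: "\<And>i. ((\<lambda>t. A (x + t *\<^sub>R axis i 1)) has_real_derivative A' i) (at 0)"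
  shows "(\<Sum>i\<in>UNIV. partial i (\<lambda>y. (A y)\<^sup>2 * (\<Sum>j\<in>UNIV. partial j u y \<bullet> partial i (partial j u) y)) x)
    = 2 * A x * (\<Sum>i\<in>UNIV. A' i * (\<Sum>j\<in>UNIV. partial j u x \<bullet> partial i (partial j u) x))
      + (A x)\<^sup>2 * hess_norm_sq u x
      + (A x)\<^sup>2 * (\<Sum>i\<in>UNIV. \<Sum>j\<in>UNIV. partial j u x \<bullet> partial i (partial i (partial j u)) x)"
proof -
  have "partial i (\<lambda>y. (A y)\<^sup>2 * (\<Sum>j\<in>UNIV. partial j u y \<bullet> partial i (partial j u) y)) x
      = 2 * A x * (A' i * (\<Sum>j\<in>UNIV. partial j u x \<bullet> partial i (partial j u) x))
        + (A x)\<^sup>2 * (\<Sum>j\<in>UNIV. partial i (partial j u) x \<bullet> partial i (partial j u) x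
          + partial j u x \<bullet> partial i (partial i (partial j u)) x)" for i
  proof -
    have "((\<lambda>t. \<Sum>j\<in>UNIV. partial j u (x + t *\<^sub>R axis i 1) \<bullet> partial i (partial j u) (x + t *\<^sub>R axis i 1))
        has_real_derivative (\<Sum>j\<in>UNIV. partial i (partial j u) x \<bullet> partial i (partial j u) x
          + partial j u x \<bullet> partial i (partial i (partial j u)) x)) (at 0)"
      by (intro DERIV_sum has_real_derivative_partial_inner du ddu)
    from partial_power2_mult[OF A this] show ?thesis by (simp add: mult.assoc)
  qed
  then show ?thesis
    by (simp add: hess_norm_sq_def power2_norm_eq_inner sum.distrib sum_distrib_left distrib_left)
qed

lemma divergence_square_identity:
  fixes u :: "real^'n::finite \<Rightarrow> real^'m::finite" and A :: "real^'n \<Rightarrow> real"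
  assumes "open \<Omega>" "x \<in> \<Omega>" "Ck 3 \<Omega> u"
    and A: "\<And>j. ((\<lambda>t. A (x + t *\<^sub>R axis j 1)) has_real_derivative A' j) (at 0)"
  shows "(norm (\<Sum>j\<in>UNIV. partial j (\<lambda>y. A y *\<^sub>R partial j u y) x))\<^sup>2
    = (\<Sum>j\<in>UNIV. partial j (\<lambda>y. (A y)\<^sup>2 * (partial j u y \<bullet> laplacian u y)) x)
      - (\<Sum>i\<in>UNIV. partial i (\<lambda>y. (A y)\<^sup>2 * (\<Sum>j\<in>UNIV. partial j u y \<bullet> partial i (partial j u) y)) x)
      + (norm (\<Sum>j\<in>UNIV. A' j *\<^sub>R partial j u x))\<^sup>2 + (A x)\<^sup>2 * hess_norm_sq u x
      + 2 * A x * (\<Sum>i\<in>UNIV. A' i * (\<Sum>j\<in>UNIV. partial j u x \<bullet> partial i (partial j u) x))"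
proof -
  note u = Ck3_D[OF assms(3)]
  define W where "W = (\<Sum>j\<in>UNIV. A' j *\<^sub>R partial j u x)"
  have div: "(\<Sum>j\<in>UNIV. partial j (\<lambda>y. A y *\<^sub>R partial j u y) x) = W + A x *\<^sub>R laplacian u x"
    using partial_scaleR[OF A u(2)[OF assms(2)]]
    by (simp add: W_def laplacian_def sum.distrib scaleR_sum_right)
  have square: "(norm (W + c *\<^sub>R L))\<^sup>2 = W \<bullet> W + 2 * c * (W \<bullet> L) + c\<^sup>2 * (L \<bullet> L)" for c L
    unfolding power2_norm_eq_inner
    by (simp add: inner_add_left inner_add_right inner_commute power2_eq_square algebra_simps)
  show ?thesis
    unfolding div square partial_weighted_gradient_laplacian[OF assms]
      partial_weighted_gradient_hessian[OF u(2,3)[OF assms(2)] A] W_def[symmetric]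
    by (simp add: power2_norm_eq_inner)
qed

lemma grad_norm_power2:
  "(grad_norm u y)\<^sup>2 = (\<Sum>k\<in>UNIV. partial k u y \<bullet> partial k u y)"
  unfolding grad_norm_def by (simp add: sum_nonneg power2_norm_eq_inner)

lemma has_real_derivative_grad_norm_power2:
  fixes u :: "real^'n::finite \<Rightarrow> real^'m::finite"
  assumes "\<And>k. partial k u differentiable (at x)"
  shows "((\<lambda>t. (grad_norm u (x + t *\<^sub>R axis j 1))\<^sup>2) has_real_derivative
      2 * (\<Sum>k\<in>UNIV. partial k u x \<bullet> partial j (partial k u) x)) (at 0)"
proof -
  have "((\<lambda>t. \<Sum>k\<in>UNIV. partial k u (x + t *\<^sub>R axis j 1) \<bullet> partial k u (x + t *\<^sub>R axis j 1))
      has_real_derivative (\<Sum>k\<in>UNIV. partial j (partial k u) x \<bullet> partial k u x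
        + partial k u x \<bullet> partial j (partial k u) x)) (at 0)"
    by (intro DERIV_sum has_real_derivative_partial_inner assms)
  then show ?thesis
    by (simp add: grad_norm_power2 inner_commute sum_distrib_left flip: mult_2)
qed

lemma has_real_derivative_comp_grad_norm_power2:
  fixes u :: "real^'n::finite \<Rightarrow> real^'m::finite"
  assumes "(ah has_real_derivative B) (at ((grad_norm u x)\<^sup>2) within {0..})"
    and "\<And>k. partial k u differentiable (at x)"
  shows "((\<lambda>t. ah ((grad_norm u (x + t *\<^sub>R axis j 1))\<^sup>2)) has_real_derivative
      B * (2 * (\<Sum>k\<in>UNIV. partial k u x \<bullet> partial j (partial k u) x))) (at 0)"
proof -
  let ?g = "\<lambda>t. (grad_norm u (x + t *\<^sub>R axis j 1))\<^sup>2"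
  have "range ?g \<subseteq> {0..}" by auto
  then have "(ah has_real_derivative B) (at (?g 0) within range ?g)"
    using has_field_derivative_subset[OF assms(1)] by simp
  from DERIV_image_chain[OF this has_real_derivative_grad_norm_power2[OF assms(2)]]
  show ?thesis by (simp add: o_def)
qed

lemma sum_inner_power2_le:
  fixes U H :: "'k \<Rightarrow> 'a::real_inner"
  shows "(\<Sum>k\<in>I. U k \<bullet> H k)\<^sup>2 \<le> (\<Sum>k\<in>I. U k \<bullet> U k) * (\<Sum>k\<in>I. (norm (H k))\<^sup>2)"
proof -
  have "\<bar>\<Sum>k\<in>I. U k \<bullet> H k\<bar> \<le> (\<Sum>k\<in>I. norm (U k) * norm (H k))"
    by (rule order_trans[OF sum_abs sum_mono[OF Cauchy_Schwarz_ineq2]])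
  then have "(\<Sum>k\<in>I. U k \<bullet> H k)\<^sup>2 \<le> (\<Sum>k\<in>I. norm (U k) * norm (H k))\<^sup>2"
    by (metis abs_ge_zero power2_abs power_mono)
  also have "\<dots> \<le> (\<Sum>k\<in>I. (norm (U k))\<^sup>2) * (\<Sum>k\<in>I. (norm (H k))\<^sup>2)"
    by (rule Cauchy_Schwarz_ineq_sum)
  finally show ?thesis by (simp add: power2_norm_eq_inner)
qed

text \<open>Read \<open>A = a(|\<nabla>u|)\<close>, \<open>s = |\<nabla>u|^2\<close>, \<open>Hn = |\<nabla>^2u|^2\<close> and \<open>V = \<Sum>i (\<nabla>u \<bullet> \<nabla>u_xi)^2\<close>.\<close>

lemma index_term_lower_bound:
  fixes A Hn s V B ia :: real
  assumes "0 \<le> A" "0 \<le> Hn" "0 \<le> V" "V \<le> s * Hn"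
    and index: "0 < s \<Longrightarrow> ia * A \<le> 2 * s * B" and "ia > - 1/2"
  shows "min 1 (1 + 2 * ia) * A\<^sup>2 * Hn \<le> A\<^sup>2 * Hn + 4 * A * B * V"
proof (cases "0 \<le> B \<or> V = 0")
  case True
  then have "0 \<le> 4 * A * B * V" using assms(1,3) by auto
  moreover have "min 1 (1 + 2 * ia) * (A\<^sup>2 * Hn) \<le> 1 * (A\<^sup>2 * Hn)"
    using assms(2) by (intro mult_right_mono) auto
  ultimately show ?thesis by (simp add: mult.assoc)
next
  case False
  then have "B < 0" and "0 < s * Hn" using assms(3,4) by auto
  then have "0 < s" using assms(2) by (simp add: zero_less_mult_iff)
  have "2 * ia * A\<^sup>2 * Hn = 2 * A * Hn * (ia * A)" by (simp add: power2_eq_square)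
  also have "\<dots> \<le> 2 * A * Hn * (2 * s * B)"
    using index[OF \<open>0 < s\<close>] assms(1,2) by (intro mult_left_mono) auto
  also have "\<dots> = 4 * A * B * (s * Hn)" by simp
  also have "\<dots> \<le> 4 * A * B * V"
    using \<open>B < 0\<close> assms(1,4) by (intro mult_left_mono_neg) (auto simp: mult_nonneg_nonpos)
  finally have "2 * ia * A\<^sup>2 * Hn \<le> 4 * A * B * V" .
  moreover have "min 1 (1 + 2 * ia) * (A\<^sup>2 * Hn) \<le> (1 + 2 * ia) * (A\<^sup>2 * Hn)"
    using assms(2) by (intro mult_right_mono) auto
  ultimately show ?thesis by (simp add: algebra_simps)
qed

lemma deriv_comp_power2:
  fixes a ah :: "real \<Rightarrow> real"
  assumes a: "\<And>t. 0 \<le> t \<Longrightarrow> a t = ah (t\<^sup>2)"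
    and ah: "(ah has_real_derivative D) (at (t\<^sup>2) within {0..})" and "0 < t"
  shows "deriv a t = D * (2 * t)"
proof -
  have "(ah has_real_derivative D) (at (t\<^sup>2) within {0<..})"
    by (rule has_field_derivative_subset[OF ah]) auto
  then have "(ah has_real_derivative D) (at (t\<^sup>2))"
    using at_within_open[of "t\<^sup>2" "{0<..}"] \<open>0 < t\<close> by simp
  then have "((\<lambda>s. ah (s\<^sup>2)) has_real_derivative D * (2 * t)) (at t)"
    by (rule DERIV_chain2[of ah D "\<lambda>s. s\<^sup>2"]) (auto intro!: derivative_eq_intros)
  then have "(a has_real_derivative D * (2 * t)) (at t)"
    by (rule has_field_derivative_transform_within_open[where S="{0<..}"]) (use a \<open>0 < t\<close> in auto)
  then show ?thesis by (rule DERIV_imp_deriv)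
qed

lemma index_a_le:
  assumes "index_a a = ereal ia" and "0 < t"
  shows "ia \<le> t * deriv a t / a t"
  using INF_lower[of t "{0<..}" "\<lambda>t. ereal (t * deriv a t / a t)"] assms
  by (simp add: index_a_def)

lemma divergence_square_lower_bound:
  fixes u :: "real^'n::finite \<Rightarrow> real^'m::finite"
  assumes "open \<Omega>" "x \<in> \<Omega>" "Ck 3 \<Omega> u" "admissible_a a"
    and index: "\<And>t. 0 < t \<Longrightarrow> ia \<le> t * deriv a t / a t" and "ia > - 1/2"
  shows "(norm (\<Sum>j\<in>UNIV. partial j (\<lambda>y. a (grad_norm u y) *\<^sub>R partial j u y) x))\<^sup>2
    \<ge> (\<Sum>j\<in>UNIV. partial j (\<lambda>y. (a (grad_norm u y))\<^sup>2 * (partial j u y \<bullet> laplacian u y)) x)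
      - (\<Sum>i\<in>UNIV. partial i (\<lambda>y. (a (grad_norm u y))\<^sup>2 *
             (\<Sum>j\<in>UNIV. partial j u y \<bullet> partial i (partial j u) y)) x)
      + min 1 (1 + 2 * ia) * (a (grad_norm u x))\<^sup>2 * hess_norm_sq u x"
proof -
  note u = Ck3_D[OF assms(3)]
  obtain ah ah' where ah: "\<And>t. 0 \<le> t \<Longrightarrow> (ah has_real_derivative ah' t) (at t within {0..})"
    and a_ah: "\<And>t. 0 \<le> t \<Longrightarrow> a t = ah (t\<^sup>2)"
    and a_nonneg: "\<And>t. 0 \<le> t \<Longrightarrow> 0 \<le> a t" and a_pos: "\<And>t. 0 < t \<Longrightarrow> 0 < a t"
    using assms(4) unfolding admissible_a_def by metis
  define s where "s = (grad_norm u x)\<^sup>2"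
  define B where "B = ah' s"
  define v where "v i = (\<Sum>k\<in>UNIV. partial k u x \<bullet> partial i (partial k u) x)" for i
  have grad_norm_nonneg: "0 \<le> grad_norm u y" for y by (simp add: grad_norm_def sum_nonneg)
  have a_eq: "a (grad_norm u y) = ah ((grad_norm u y)\<^sup>2)" for y
    using a_ah grad_norm_nonneg by blast
  have A': "((\<lambda>t. ah ((grad_norm u (x + t *\<^sub>R axis j 1))\<^sup>2)) has_real_derivative B * (2 * v j)) (at 0)"
    for j unfolding B_def s_def v_def
    by (intro has_real_derivative_comp_grad_norm_power2 ah u(2) assms(2)) simp
  have "(v i)\<^sup>2 \<le> s * (\<Sum>k\<in>UNIV. (norm (partial i (partial k u) x))\<^sup>2)" for i
    unfolding v_def s_def grad_norm_power2 by (rule sum_inner_power2_le)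
  then have V: "(\<Sum>i\<in>UNIV. (v i)\<^sup>2) \<le> s * hess_norm_sq u x"
    unfolding hess_norm_sq_def sum_distrib_left by (rule sum_mono)
  have "ia * a (grad_norm u x) \<le> 2 * s * B" if "0 < s"
  proof -
    have t: "0 < grad_norm u x" using that grad_norm_nonneg[of x] by (simp add: s_def)
    have "deriv a (grad_norm u x) = B * (2 * grad_norm u x)"
      using deriv_comp_power2[OF a_ah ah t] by (simp add: B_def s_def)
    then show ?thesis
      using index[OF t] a_pos[OF t] by (simp add: s_def power2_eq_square field_simps)
  qed
  then have "min 1 (1 + 2 * ia) * (a (grad_norm u x))\<^sup>2 * hess_norm_sq u x
      \<le> (a (grad_norm u x))\<^sup>2 * hess_norm_sq u x + 4 * a (grad_norm u x) * B * (\<Sum>i\<in>UNIV. (v i)\<^sup>2)"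
    using V assms(6) a_nonneg grad_norm_nonneg
    by (intro index_term_lower_bound) (auto simp: hess_norm_sq_def intro!: sum_nonneg)
  moreover have "2 * a (grad_norm u x) * (\<Sum>i\<in>UNIV. B * (2 * v i) * v i)
      = 4 * a (grad_norm u x) * B * (\<Sum>i\<in>UNIV. (v i)\<^sup>2)"
    by (simp add: sum_distrib_left power2_eq_square algebra_simps)
  ultimately show ?thesis
    unfolding a_eq divergence_square_identity[OF assms(1-3) A'] v_def[symmetric]
    using zero_le_power2[of "norm (\<Sum>j\<in>UNIV. (B * (2 * v j)) *\<^sub>R partial j u x)"] by linarith
qed

theorem lemma3p3:
  fixes ia :: real
  assumes n2: "CARD('n::finite) \<ge> 2"
    and ia: "ia > - 1/2"
  shows "\<exists>C>0. \<forall>(a::real \<Rightarrow> real) (\<Omega>::(real^'n) set) (u::real^'n \<Rightarrow> real^'m::finite).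
     admissible_a a \<and> index_a a = ereal ia \<and> open \<Omega> \<and> Ck 3 \<Omega> u \<longrightarrow>
     (\<forall>x\<in>\<Omega>.
        (norm (\<Sum>j\<in>UNIV. partial j (\<lambda>y. a (grad_norm u y) *\<^sub>R partial j u y) x))\<^sup>2
        \<ge> (\<Sum>j\<in>UNIV. partial j (\<lambda>y. (a (grad_norm u y))\<^sup>2 * (partial j u y \<bullet> laplacian u y)) x)
          - (\<Sum>i\<in>UNIV. partial i (\<lambda>y. (a (grad_norm u y))\<^sup>2 *
                 (\<Sum>j\<in>UNIV. partial j u y \<bullet> partial i (partial j u) y)) x)
          + C * (a (grad_norm u x))\<^sup>2 * hess_norm_sq u x)"
  using ia
  by (intro exI[of _ "min 1 (1 + 2 * ia)"] conjI allI impI ballI)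
    (auto intro!: divergence_square_lower_bound index_a_le)

end
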